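(* For every integer $s\ge 3$ and every $t\in\{0,1\}$ there exists $C>0$ such that every $K_{s,t}$-free graph $G$ admits a clique cover of size at most $C|G|^{2-1/s}$.
   Context: All graphs are finite and simple; $|G|$ is the number of vertices. A graph is $K_{s,t}$-free if it has no induced subgraph isomorphic to the complete bipartite graph $K_{s,t}$ (for $t=0$ this means no stable set of size $s$). A clique $X$ of $G$ covers an edge $uv$ if $u,v\in X$; a clique cover of $G$ is a collection of cliques of $G$ that together cover all edges of $G$, and its size is the number of cliques in it. *)

theory Defs
  imports Complex_Main
begin

definition simple_graph :: "'a set \<Rightarrow> ('a \<Rightarrow> 'a \<Rightarrow> bool) \<Rightarrow> bool" where
  "simple_graph V E \<longleftrightarrow> finite V \<and> (\<forall>u v. E u v \<longrightarrow> u \<in> V \<and> v \<in> V)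
     \<and> (\<forall>u v. E u v \<longrightarrow> E v u) \<and> (\<forall>v. \<not> E v v)"

definition stable_set :: "'a set \<Rightarrow> ('a \<Rightarrow> 'a \<Rightarrow> bool) \<Rightarrow> 'a set \<Rightarrow> bool" where
  "stable_set V E S \<longleftrightarrow> S \<subseteq> V \<and> (\<forall>u\<in>S. \<forall>v\<in>S. \<not> E u v)"

text \<open>G contains an induced subgraph isomorphic to K_{s,t}: disjoint stable
sets A, B with |A| = s, |B| = t and every vertex of A adjacent to every vertex of B.
(For t = 0 this is a stable set of size s.)\<close>
definition has_induced_Kst :: "'a set \<Rightarrow> ('a \<Rightarrow> 'a \<Rightarrow> bool) \<Rightarrow> nat \<Rightarrow> nat \<Rightarrow> bool" where
  "has_induced_Kst V E s t \<longleftrightarrow> (\<exists>A B. A \<inter> B = {} \<and> card A = s \<and> card B = t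
     \<and> finite A \<and> finite B
     \<and> stable_set V E A \<and> stable_set V E B \<and> (\<forall>a\<in>A. \<forall>b\<in>B. E a b))"

definition Kst_free :: "'a set \<Rightarrow> ('a \<Rightarrow> 'a \<Rightarrow> bool) \<Rightarrow> nat \<Rightarrow> nat \<Rightarrow> bool" where
  "Kst_free V E s t \<longleftrightarrow> \<not> has_induced_Kst V E s t"

definition is_clique :: "'a set \<Rightarrow> ('a \<Rightarrow> 'a \<Rightarrow> bool) \<Rightarrow> 'a set \<Rightarrow> bool" where
  "is_clique V E X \<longleftrightarrow> X \<subseteq> V \<and> (\<forall>u\<in>X. \<forall>v\<in>X. u \<noteq> v \<longrightarrow> E u v)"

definition clique_cover :: "'a set \<Rightarrow> ('a \<Rightarrow> 'a \<Rightarrow> bool) \<Rightarrow> 'a set set \<Rightarrow> bool" where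
  "clique_cover V E \<C> \<longleftrightarrow> finite \<C> \<and> (\<forall>X\<in>\<C>. is_clique V E X)
     \<and> (\<forall>u v. E u v \<longrightarrow> (\<exists>X\<in>\<C>. u \<in> X \<and> v \<in> X))"

end

(*
  For t <= 1, an induced K_{s,t}-free graph has no stable set of size s inside any
  neighbourhood N(v). A vertex set without stable sets of size r + 1 and with at least
  k^r vertices contains a k-clique (pick a vertex with at least k^(r-1) non-neighbours and
  recurse, or, if there is none, build a clique greedily). Peeling off k-cliques while
  at least k^(s-1) vertices remain, and taking singletons afterwards, covers N(v) by at
  most (|N(v)| + k^s)/k cliques; adding v to each of them covers the edges at v. This
  gives a clique cover with at most n (n + k^s)/k cliques, and k = floor(n^(1/s)) makes
  it at most 4 n^(2-1/s).
*)

theory Submission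
  imports Defs
begin

definition independence_number_le :: "'a set \<Rightarrow> ('a \<Rightarrow> 'a \<Rightarrow> bool) \<Rightarrow> nat \<Rightarrow> bool" where
  "independence_number_le W E r \<longleftrightarrow> (\<forall>S. stable_set W E S \<longrightarrow> card S \<le> r)"

definition non_neighbours :: "'a set \<Rightarrow> ('a \<Rightarrow> 'a \<Rightarrow> bool) \<Rightarrow> 'a \<Rightarrow> 'a set" where
  "non_neighbours W E w = {u \<in> W. u \<noteq> w \<and> \<not> E w u}"

lemma independence_number_le_subset:
  "independence_number_le W E r \<Longrightarrow> W' \<subseteq> W \<Longrightarrow> independence_number_le W' E r"
  unfolding independence_number_le_def stable_set_def by blast

lemma independence_number_le_non_neighbours:
  assumes sym: "\<And>u v. E u v \<Longrightarrow> E v u" and irr: "\<And>v. \<not> E v v"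
    and "w \<in> W" and "finite W" and "independence_number_le W E (Suc r)"
  shows "independence_number_le (non_neighbours W E w) E r"
  unfolding independence_number_le_def
proof (intro allI impI)
  fix S assume S: "stable_set (non_neighbours W E w) E S"
  then have "stable_set W E (insert w S)"
    using \<open>w \<in> W\<close> sym irr by (auto simp: stable_set_def non_neighbours_def)
  then have "card (insert w S) \<le> Suc r"
    using assms(5) by (simp add: independence_number_le_def)
  moreover have "w \<notin> S" and "finite S"
    using S \<open>finite W\<close> by (auto simp: stable_set_def non_neighbours_def intro: finite_subset)
  ultimately show "card S \<le> r" by simp
qed

lemma is_clique_mono: "is_clique W E X \<Longrightarrow> W \<subseteq> W' \<Longrightarrow> is_clique W' E X"
  unfolding is_clique_def by blast

lemma clique_of_few_non_neighbours:
  assumes sym: "\<And>u v. E u v \<Longrightarrow> E v u" and "finite W"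
    and "\<And>w. w \<in> W \<Longrightarrow> card (non_neighbours W E w) < D"
  shows "\<exists>X. is_clique W E X \<and> card W \<le> D * card X"
  using assms(2,3)
proof (induction W rule: finite_psubset_induct)
  case (psubset W)
  show ?case
  proof (cases "W = {}")
    case True
    then show ?thesis by (intro exI[of _ "{}"]) (simp add: is_clique_def)
  next
    case False
    then obtain w where w: "w \<in> W" by blast
    define W' where "W' = {u \<in> W. u \<noteq> w \<and> E w u}"
    have "W' \<subset> W" using w by (auto simp: W'_def)
    moreover have "card (non_neighbours W' E x) < D" if "x \<in> W'" for x
    proof -
      have "card (non_neighbours W' E x) \<le> card (non_neighbours W E x)"
        using psubset.hyps by (intro card_mono) (auto simp: non_neighbours_def W'_def)
      with psubset.prems that show ?thesis by (fastforce simp: W'_def)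
    qed
    ultimately obtain X where X: "is_clique W' E X" "card W' \<le> D * card X"
      using psubset.IH by blast
    have "W - {w} = non_neighbours W E w \<union> W'"
      by (auto simp: non_neighbours_def W'_def)
    then have "card W \<le> Suc (card (non_neighbours W E w) + card W')"
      using card_Suc_Diff1[OF psubset.hyps w] card_Un_le[of "non_neighbours W E w" W'] by simp
    also have "\<dots> \<le> D + card W'"
      using psubset.prems w by (simp add: Suc_le_eq)
    finally have "card W \<le> D * Suc (card X)" using X(2) by simp
    moreover have "is_clique W E (insert w X)"
      using X(1) w sym by (auto simp: is_clique_def W'_def)
    moreover have "card (insert w X) = Suc (card X)"
      using X(1) \<open>W' \<subset> W\<close> psubset.hyps
      by (auto simp: is_clique_def W'_def intro!: card_insert_disjoint dest: finite_subset)
    ultimately show ?thesis by metis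
  qed
qed

lemma ramsey_clique:
  assumes sym: "\<And>u v. E u v \<Longrightarrow> E v u" and irr: "\<And>v. \<not> E v v"
    and "finite W" and "independence_number_le W E r" and "k ^ r \<le> card W"
  shows "\<exists>X. is_clique W E X \<and> k \<le> card X"
  using assms(3-5)
proof (induction r arbitrary: W)
  case 0
  then obtain w where "w \<in> W" by fastforce
  then have "stable_set W E {w}" using irr by (simp add: stable_set_def)
  with "0.prems"(2) show ?case by (force simp: independence_number_le_def)
next
  case (Suc r)
  show ?case
  proof (cases "\<exists>w\<in>W. k ^ r \<le> card (non_neighbours W E w)")
    case True
    then obtain w where w: "w \<in> W" and big: "k ^ r \<le> card (non_neighbours W E w)" by blast
    have "finite (non_neighbours W E w)" using Suc.prems(1) by (simp add: non_neighbours_def)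
    moreover have "independence_number_le (non_neighbours W E w) E r"
      using independence_number_le_non_neighbours[OF sym irr w Suc.prems(1,2)] .
    ultimately obtain X where "is_clique (non_neighbours W E w) E X" "k \<le> card X"
      using Suc.IH big by blast
    moreover have "non_neighbours W E w \<subseteq> W" by (auto simp: non_neighbours_def)
    ultimately show ?thesis using is_clique_mono by blast
  next
    case False
    then obtain X where X: "is_clique W E X" "card W \<le> k ^ r * card X"
      using clique_of_few_non_neighbours[OF sym Suc.prems(1), where D = "k ^ r"] by (meson not_le)
    with Suc.prems(3) have "k * k ^ r \<le> card X * k ^ r"
      by (metis le_trans mult.commute power_Suc)
    then have "k \<le> card X" by (cases "k = 0") auto
    with X(1) show ?thesis by blast
  qed
qed

lemma cliques_cover_vertices:
  assumes sym: "\<And>u v. E u v \<Longrightarrow> E v u" and irr: "\<And>v. \<not> E v v" and "0 < k"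
    and "finite W" and "independence_number_le W E r"
  shows "\<exists>Q. finite Q \<and> (\<forall>X\<in>Q. is_clique W E X) \<and> W \<subseteq> \<Union>Q
    \<and> k * card Q \<le> card W + k ^ Suc r"
  using assms(4,5)
proof (induction W rule: finite_psubset_induct)
  case (psubset W)
  show ?case
  proof (cases "card W < k ^ r")
    case True
    define Q where "Q = (\<lambda>w. {w}) ` W"
    have "k * card Q \<le> k ^ Suc r"
      using True card_image_le[OF psubset.hyps, of "\<lambda>w. {w}"] by (simp add: Q_def)
    then have "k * card Q \<le> card W + k ^ Suc r" by linarith
    moreover have "\<forall>X\<in>Q. is_clique W E X" by (auto simp: Q_def is_clique_def)
    moreover have "finite Q" "W \<subseteq> \<Union>Q" using psubset.hyps by (auto simp: Q_def)
    ultimately show ?thesis by blast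
  next
    case False
    then obtain X where X: "is_clique W E X" "k \<le> card X"
      using ramsey_clique[OF sym irr psubset.hyps psubset.prems] by force
    then have "X \<subseteq> W" and "X \<noteq> {}" using \<open>0 < k\<close> by (auto simp: is_clique_def)
    then have smaller: "W - X \<subset> W" by blast
    have "independence_number_le (W - X) E r"
      by (rule independence_number_le_subset[OF psubset.prems]) blast
    then obtain Q where Q: "finite Q" "\<forall>Y\<in>Q. is_clique (W - X) E Y" "W - X \<subseteq> \<Union>Q"
      "k * card Q \<le> card (W - X) + k ^ Suc r"
      using psubset.IH[OF smaller] by blast
    have "card W = card (W - X) + card X"
      using card_Diff_subset[OF finite_subset[OF \<open>X \<subseteq> W\<close> psubset.hyps] \<open>X \<subseteq> W\<close>]
        card_mono[OF psubset.hyps \<open>X \<subseteq> W\<close>] by simp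
    moreover have "card (insert X Q) \<le> Suc (card Q)" using Q(1) by (simp add: card_insert_if)
    then have "k * card (insert X Q) \<le> k + k * card Q" by (metis mult_Suc_right mult_le_mono2)
    ultimately have "k * card (insert X Q) \<le> card W + k ^ Suc r" using Q(4) X(2) by linarith
    moreover have "\<forall>Y\<in>insert X Q. is_clique W E Y"
      using Q(2) X(1) is_clique_mono[of "W - X" E _ W] by blast
    moreover have "finite (insert X Q)" "W \<subseteq> \<Union>(insert X Q)" using Q(1,3) by auto
    ultimately show ?thesis by blast
  qed
qed

lemma Kst_free_neighbourhood_independence_number_le:
  assumes G: "simple_graph V E" and free: "Kst_free V E (Suc r) t" and t: "t \<in> {0, 1}"
    and v: "v \<in> V"
  shows "independence_number_le {u. E v u} E r"
  unfolding independence_number_le_def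
proof (intro allI impI)
  fix S assume S: "stable_set {u. E v u} E S"
  show "card S \<le> r"
  proof (rule ccontr)
    assume "\<not> card S \<le> r"
    then obtain A where A: "A \<subseteq> S" "card A = Suc r" "finite A"
      by (meson not_less_eq_eq obtain_subset_with_card_n)
    have inV: "\<And>u w. E u w \<Longrightarrow> u \<in> V \<and> w \<in> V" and sym: "\<And>u w. E u w \<Longrightarrow> E w u"
      and irr: "\<not> E v v"
      using G by (auto simp: simple_graph_def)
    have "stable_set V E A" using A(1) S inV unfolding stable_set_def by blast
    moreover have "stable_set V E {v}" using v irr by (simp add: stable_set_def)
    moreover have "A \<inter> {v} = {}" and "\<forall>a\<in>A. E a v"
      using A(1) S irr sym by (auto simp: stable_set_def)
    ultimately have "has_induced_Kst V E (Suc r) 0" and "has_induced_Kst V E (Suc r) 1"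
      using A(2,3) unfolding has_induced_Kst_def
      by (intro exI[of _ A] exI[of _ "{}"], simp add: stable_set_def,
          intro exI[of _ A] exI[of _ "{v}"], simp)
    then have "has_induced_Kst V E (Suc r) t" using t by auto
    with free show False by (simp add: Kst_free_def)
  qed
qed

lemma clique_cover_from_neighbourhood_covers:
  assumes G: "simple_graph V E"
    and Q: "\<And>v. v \<in> V \<Longrightarrow> finite (Q v)" "\<And>v X. v \<in> V \<Longrightarrow> X \<in> Q v \<Longrightarrow> is_clique {u. E v u} E X"
      "\<And>v. v \<in> V \<Longrightarrow> {u. E v u} \<subseteq> \<Union>(Q v)"
  shows "clique_cover V E (\<Union>v\<in>V. insert v ` Q v)"
    and "card (\<Union>v\<in>V. insert v ` Q v) \<le> (\<Sum>v\<in>V. card (Q v))"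
proof -
  have fin: "finite V" and inV: "\<And>u v. E u v \<Longrightarrow> u \<in> V \<and> v \<in> V"
    and sym: "\<And>u v. E u v \<Longrightarrow> E v u"
    using G by (auto simp: simple_graph_def)
  have "is_clique V E (insert v X)" if "v \<in> V" "X \<in> Q v" for v X
    using Q(2)[OF that] that(1) inV sym by (auto simp: is_clique_def)
  moreover have "\<exists>Y\<in>(\<Union>v\<in>V. insert v ` Q v). u \<in> Y \<and> w \<in> Y" if "E u w" for u w
  proof -
    have "w \<in> \<Union>(Q u)" using Q(3)[of u] inV[OF that] that by blast
    then obtain X where "X \<in> Q u" "w \<in> X" by blast
    then show ?thesis using inV that by blast
  qed
  moreover have "finite (\<Union>v\<in>V. insert v ` Q v)" using fin Q(1) by simp
  ultimately show "clique_cover V E (\<Union>v\<in>V. insert v ` Q v)"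
    unfolding clique_cover_def by blast
  have "card (\<Union>v\<in>V. insert v ` Q v) \<le> (\<Sum>v\<in>V. card (insert v ` Q v))"
    by (rule card_UN_le[OF fin])
  also have "\<dots> \<le> (\<Sum>v\<in>V. card (Q v))"
    by (intro sum_mono card_image_le Q(1))
  finally show "card (\<Union>v\<in>V. insert v ` Q v) \<le> (\<Sum>v\<in>V. card (Q v))" .
qed

lemma clique_cover_card_le:
  assumes G: "simple_graph V E" and "0 < k"
    and indep: "\<And>v. v \<in> V \<Longrightarrow> independence_number_le {u. E v u} E r"
  shows "\<exists>\<C>. clique_cover V E \<C> \<and> k * card \<C> \<le> card V * (card V + k ^ Suc r)"
proof -
  have fin: "finite V" and inV: "\<And>u v. E u v \<Longrightarrow> u \<in> V \<and> v \<in> V"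
    and sym: "\<And>u v. E u v \<Longrightarrow> E v u" and irr: "\<And>v. \<not> E v v"
    using G by (auto simp: simple_graph_def)
  have nbhd_sub: "{u. E v u} \<subseteq> V" for v using inV by blast
  have "\<exists>Q. finite Q \<and> (\<forall>X\<in>Q. is_clique {u. E v u} E X) \<and> {u. E v u} \<subseteq> \<Union>Q
      \<and> k * card Q \<le> card {u. E v u} + k ^ Suc r" if "v \<in> V" for v
    using cliques_cover_vertices[OF sym irr \<open>0 < k\<close> finite_subset[OF nbhd_sub fin] indep[OF that]] .
  then obtain Q where Q: "\<And>v. v \<in> V \<Longrightarrow> finite (Q v) \<and> (\<forall>X\<in>Q v. is_clique {u. E v u} E X)
      \<and> {u. E v u} \<subseteq> \<Union>(Q v) \<and> k * card (Q v) \<le> card {u. E v u} + k ^ Suc r"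
    by metis
  define \<C> where "\<C> = (\<Union>v\<in>V. insert v ` Q v)"
  have "k * card \<C> \<le> k * (\<Sum>v\<in>V. card (Q v))"
    using clique_cover_from_neighbourhood_covers(2)[OF G, of Q] Q by (simp add: \<C>_def)
  also have "\<dots> = (\<Sum>v\<in>V. k * card (Q v))" by (rule sum_distrib_left)
  also have "\<dots> \<le> (\<Sum>v\<in>V. card V + k ^ Suc r)"
  proof (rule sum_mono)
    fix v assume "v \<in> V"
    moreover have "card {u. E v u} \<le> card V" by (rule card_mono[OF fin nbhd_sub])
    ultimately show "k * card (Q v) \<le> card V + k ^ Suc r" using Q by fastforce
  qed
  also have "\<dots> = card V * (card V + k ^ Suc r)" by simp
  finally show ?thesis
    using clique_cover_from_neighbourhood_covers(1)[OF G, of Q] Q unfolding \<C>_def by blast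
qed

lemma exists_balancing_clique_size:
  assumes "0 < s"
  shows "\<exists>k>0. real n * (real n + real k ^ s) \<le> 4 * real k * real n powr (2 - 1 / real s)"
proof (cases "n = 0")
  case True
  then show ?thesis by (intro exI[of _ 1]) simp
next
  case False
  define x where "x = real n powr (1 / real s)"
  define k where "k = nat \<lfloor>x\<rfloor>"
  have "x \<ge> 1" using False by (simp add: x_def ge_one_powr_ge_zero)
  then have "1 \<le> real_of_int \<lfloor>x\<rfloor>" "real_of_int \<lfloor>x\<rfloor> \<le> x" "x < real_of_int \<lfloor>x\<rfloor> + 1"
    by simp_all
  moreover have "real k = real_of_int \<lfloor>x\<rfloor>" using \<open>x \<ge> 1\<close> by (simp add: k_def)
  ultimately have "0 < k" "real k \<le> x" "x \<le> 2 * real k" by linarith+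
  have "x ^ s = real n" using \<open>0 < s\<close> False by (simp add: x_def powr_power)
  then have "real k ^ s \<le> real n" using \<open>real k \<le> x\<close> by (metis of_nat_0_le_iff power_mono)
  then have "real n * (real n + real k ^ s) \<le> real n * (2 * real n)"
    by (intro mult_left_mono) auto
  also have "\<dots> = 2 * x * (real n ^ 2 / x)"
    using \<open>x \<ge> 1\<close> by (simp add: power2_eq_square)
  also have "\<dots> = 2 * x * real n powr (2 - 1 / real s)"
    using False by (simp add: x_def powr_diff)
  also have "\<dots> \<le> 4 * real k * real n powr (2 - 1 / real s)"
    using \<open>x \<le> 2 * real k\<close> by (intro mult_right_mono) auto
  finally show ?thesis using \<open>0 < k\<close> by blast
qed

theorem mainTheorem6:
  fixes s t :: nat
  assumes "s \<ge> 3" and "t \<in> {0, 1}"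
  shows "\<exists>C::real. C > 0 \<and>
    (\<forall>(V::nat set) E. simple_graph V E \<and> Kst_free V E s t \<longrightarrow>
       (\<exists>\<C>. clique_cover V E \<C> \<and>
          real (card \<C>) \<le> C * real (card V) powr (2 - 1 / real s)))"
proof -
  obtain r where s: "s = Suc r" using assms(1) by (cases s) auto
  have "\<exists>\<C>. clique_cover V E \<C> \<and> real (card \<C>) \<le> 4 * real (card V) powr (2 - 1 / real s)"
    if G: "simple_graph V E" and free: "Kst_free V E s t" for V :: "nat set" and E
  proof -
    obtain k where "0 < k"
      and k: "real (card V) * (real (card V) + real k ^ s)
        \<le> 4 * real k * real (card V) powr (2 - 1 / real s)"
      using exists_balancing_clique_size[of s "card V"] s by auto
    have "independence_number_le {u. E v u} E r" if "v \<in> V" for v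
      using Kst_free_neighbourhood_independence_number_le[OF G _ assms(2) that] free s by simp
    then obtain \<C> where \<C>: "clique_cover V E \<C>"
      and card_\<C>: "k * card \<C> \<le> card V * (card V + k ^ s)"
      using clique_cover_card_le[OF G \<open>0 < k\<close>] s by blast
    have "real k * real (card \<C>) \<le> real (card V) * (real (card V) + real k ^ s)"
      using card_\<C> by (metis of_nat_le_iff of_nat_mult of_nat_add of_nat_power)
    with k have "real k * real (card \<C>) \<le> real k * (4 * real (card V) powr (2 - 1 / real s))"
      by simp
    then show ?thesis using \<C> \<open>0 < k\<close> by auto
  qed
  then show ?thesis by (intro exI[of _ 4]) auto
qed

end
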